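(* For every $F\subset E_d(\square_m)$ and $j\in\mathbb N$, $$-\nabla\cdot\big(\mathbf a^F\nabla V_m(F,j)\big)=\nabla\cdot\mathbf W_m(F,j)\quad\text{at every point of }\mathrm{int}(\square_m),$$ where $\mathbf W_m(F,j)$ is the anti-symmetric vector field on oriented edges of $\square_m$ $$\mathbf W_m(F,j)=\sum_{e\in E_d(\square_m)\setminus F}(\mathbf a^e-\mathbf a)\Big(\nabla V_m(F,j-1)-\nabla V_m(F\cup\{e\},j-2)+\nabla V_m(F\cup\{e\},j-1)\Big)+\sum_{e\in F}(\mathbf a^e-\mathbf a)\Big(\nabla V_m(F\setminus\{e\},j)-\nabla V_m(F,j-1)\Big).$$
   Context: Bond configurations on $\mathbb Z^d$. $\square_m=\mathbb Z^d\cap(-3^m/2,3^m/2)^d$; $E_d(U)$ nearest-neighbour edges inside $U$; $\partial U=\{x\in U:\exists y\sim x,y\notin U\}$, $\mathrm{int}(U)=U\setminus\partial U$. $\nabla u(x,y)=u(y)-u(x)$; for a function $\mathbf b$ on edges and a vector field $W$, $(\mathbf bW)(x,y)=\mathbf b(\{x,y\})W(x,y)$; divergence $\nabla\cdot W(x)=\sum_{y\sim x}W(x,y)$. Fix $\xi\in\mathbb R^d$; for each configuration $\mathbf b$, $v_m(\mathbf b)$ is a fixed function on $\square_m$ with $v_m(\mathbf b)=\xi\cdot x$ on $\partial\square_m$ and $\nabla\cdot(\mathbf b\nabla v_m(\mathbf b))=0$ at every $x\in\mathrm{int}(\square_m)$. $\mathbf a^G(e)=\mathbf 1_{e\in G}+\mathbf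 a(e)\mathbf 1_{e\notin G}$, $\mathbf a^e=\mathbf a^{\{e\}}$; $D_Gf(\mathbf a)=\sum_{G'\subset G}(-1)^{|G\setminus G'|}f(\mathbf a^{G'})$. $V_m(F,j)=\sum_{G\subset E_d(\square_m)\setminus F,|G|=j}D_{F\cup G}v_m$ evaluated at $\mathbf a$, with $V_m(F,j)=0$ for $j<0$. *)

theory Defs
  imports "HOL-Analysis.Analysis"
begin

text \<open>Points of Z^d are integer vectors indexed by a finite type 'd; edges are
unordered pairs (two-element sets) of nearest neighbours; configurations are
real-valued functions on edges; vector fields on oriented edges are functions of
two points.\<close>

type_synonym 'd pt = "int ^ 'd"
type_synonym 'd edge = "'d pt set"
type_synonym 'd conf = "'d edge \<Rightarrow> real"

definition nn :: "'d::finite pt \<Rightarrow> 'd pt \<Rightarrow> bool" where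
  "nn x y \<longleftrightarrow> (\<Sum>i\<in>UNIV. \<bar>x $ i - y $ i\<bar>) = 1"

definition box :: "nat \<Rightarrow> 'd::finite pt set" where
  "box m = {x. \<forall>i. \<bar>real_of_int (x $ i)\<bar> < 3 ^ m / 2}"

definition edges :: "'d::finite pt set \<Rightarrow> 'd edge set" where
  "edges U = {{x, y} | x y. x \<in> U \<and> y \<in> U \<and> nn x y}"

definition bdry :: "'d::finite pt set \<Rightarrow> 'd pt set" where
  "bdry U = {x \<in> U. \<exists>y. nn x y \<and> y \<notin> U}"

definition intr :: "'d::finite pt set \<Rightarrow> 'd pt set" where
  "intr U = U - bdry U"

definition grad :: "('d pt \<Rightarrow> real) \<Rightarrow> 'd pt \<Rightarrow> 'd pt \<Rightarrow> real" where
  "grad u x y = u y - u x"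

definition cmul :: "'d conf \<Rightarrow> ('d pt \<Rightarrow> 'd pt \<Rightarrow> real) \<Rightarrow> 'd pt \<Rightarrow> 'd pt \<Rightarrow> real" where
  "cmul b W x y = b {x, y} * W x y"

definition dvg :: "('d::finite pt \<Rightarrow> 'd pt \<Rightarrow> real) \<Rightarrow> 'd pt \<Rightarrow> real" where
  "dvg W x = (\<Sum>y\<in>{y. nn x y}. W x y)"

definition cupd :: "'d conf \<Rightarrow> 'd edge set \<Rightarrow> 'd conf" where
  "cupd a G e = (if e \<in> G then 1 else a e)"

definition Dop :: "'d edge set \<Rightarrow> ('d conf \<Rightarrow> 'd pt \<Rightarrow> real) \<Rightarrow> 'd conf \<Rightarrow> 'd pt \<Rightarrow> real" where
  "Dop G f a x = (\<Sum>G'\<in>Pow G. (-1) ^ card (G - G') * f (cupd a G') x)"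

definition Vm :: "nat \<Rightarrow> ('d::finite conf \<Rightarrow> 'd pt \<Rightarrow> real) \<Rightarrow> 'd conf \<Rightarrow> 'd edge set \<Rightarrow> int \<Rightarrow> 'd pt \<Rightarrow> real" where
  "Vm m v a F j x = (if j < 0 then 0 else
     (\<Sum>G\<in>{G. G \<subseteq> edges (box m) - F \<and> card G = nat j}. Dop (F \<union> G) v a x))"

definition Wm :: "nat \<Rightarrow> ('d::finite conf \<Rightarrow> 'd pt \<Rightarrow> real) \<Rightarrow> 'd conf \<Rightarrow> 'd edge set \<Rightarrow> int \<Rightarrow> 'd pt \<Rightarrow> 'd pt \<Rightarrow> real" where
  "Wm m v a F j x y =
     (\<Sum>e\<in>edges (box m) - F. (cupd a {e} {x, y} - a {x, y}) *
        (grad (Vm m v a F (j - 1)) x y - grad (Vm m v a (F \<union> {e}) (j - 2)) x y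
         + grad (Vm m v a (F \<union> {e}) (j - 1)) x y))
   + (\<Sum>e\<in>F. (cupd a {e} {x, y} - a {x, y}) *
        (grad (Vm m v a (F - {e}) j) x y - grad (Vm m v a F (j - 1)) x y))"

end

theory Submission
  imports Defs
begin

text \<open>Every \<open>v(a\<^sup>G)\<close> is \<open>a\<^sup>G\<close>-harmonic, and \<open>a\<^sup>G\<close> differs from \<open>a\<^sup>F\<close> by the
single-edge perturbations \<open>a\<^sup>e - a\<close>, added for \<open>e \<in> G - F\<close> and removed for \<open>e \<in> F - G\<close>.
Expanding \<open>V\<^sub>m(F,j)\<close> into its terms \<open>\<plusminus>v(a\<^sup>G)\<close>, harmonicity therefore rewrites
\<open>-\<nabla>\<cdot>(a\<^sup>F\<nabla>V\<^sub>m(F,j))\<close> as a sum over edges \<open>e\<close> of \<open>\<nabla>\<cdot>((a\<^sup>e - a)\<nabla>U\<^sub>e)\<close>, where \<open>U\<^sub>e\<close> collects the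
terms whose index set contains \<open>e\<close> (for \<open>e \<notin> F\<close>) or avoids it (for \<open>e \<in> F\<close>). Pascal's rule
for subsets of fixed cardinality identifies each \<open>U\<^sub>e\<close> with the combination of \<open>V\<^sub>m\<close>'s
appearing in \<open>W\<^sub>m(F,j)\<close>. The boundary values of \<open>v\<close> play no role.\<close>

text \<open>\<open>mixed_diff H g\<close> is \<open>D\<^sub>H\<close>, and \<open>layer_diff E F j g\<close> is \<open>V\<^sub>m(F,j)\<close> for
\<open>E = E\<^sub>d(\<box>\<^sub>m)\<close> and \<open>g G = v(a\<^sup>G)\<close> at a fixed point. Indexing the layer by
\<open>int (card G) = j\<close> makes it vanish for \<open>j < 0\<close> without a case distinction.\<close>

definition mixed_diff :: "'a set \<Rightarrow> ('a set \<Rightarrow> 'b::comm_ring_1) \<Rightarrow> 'b" where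
  "mixed_diff H g = (\<Sum>G\<in>Pow H. (-1) ^ card (H - G) * g G)"

definition layer_diff :: "'a set \<Rightarrow> 'a set \<Rightarrow> int \<Rightarrow> ('a set \<Rightarrow> 'b::comm_ring_1) \<Rightarrow> 'b" where
  "layer_diff E F j g = (\<Sum>G | G \<subseteq> E - F \<and> int (card G) = j. mixed_diff (F \<union> G) g)"

lemma sum_subsets_card_insert_split:
  assumes "finite A" "e \<in> A"
  shows "(\<Sum>G | G \<subseteq> A \<and> int (card G) = j. h G)
    = (\<Sum>G | G \<subseteq> A - {e} \<and> int (card G) = j - 1. h (insert e G))
      + (\<Sum>G | G \<subseteq> A - {e} \<and> int (card G) = j. h G)"
proof -
  have fin: "finite {G. G \<subseteq> B \<and> P G}" if "B \<subseteq> A" for B P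
    using assms(1) that by (auto intro: finite_subset[of _ "Pow A"])
  have "(\<Sum>G | G \<subseteq> A \<and> int (card G) = j. h G)
      = (\<Sum>G | G \<subseteq> A \<and> int (card G) = j \<and> e \<in> G. h G)
        + (\<Sum>G | G \<subseteq> A \<and> int (card G) = j \<and> e \<notin> G. h G)"
    by (subst sum.union_disjoint[symmetric]) (auto intro!: sum.cong fin)
  also have "(\<Sum>G | G \<subseteq> A \<and> int (card G) = j \<and> e \<in> G. h G)
      = (\<Sum>G | G \<subseteq> A - {e} \<and> int (card G) = j - 1. h (insert e G))"
  proof (rule sum.reindex_bij_witness[of _ "\<lambda>G. insert e G" "\<lambda>G. G - {e}"])
    fix G assume "G \<in> {G. G \<subseteq> A - {e} \<and> int (card G) = j - 1}"
    moreover have "finite G" using calculation assms(1) by (auto dest: finite_subset)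
    moreover have "e \<notin> G" using calculation by blast
    ultimately show "insert e G \<in> {G. G \<subseteq> A \<and> int (card G) = j \<and> e \<in> G}"
      using assms(2) by auto
  next
    fix G assume "G \<in> {G. G \<subseteq> A \<and> int (card G) = j \<and> e \<in> G}"
    moreover have "finite G" using calculation assms(1) by (auto dest: finite_subset)
    moreover have "card G > 0" using calculation by (auto simp: card_gt_0_iff)
    ultimately show "G - {e} \<in> {G. G \<subseteq> A - {e} \<and> int (card G) = j - 1}"
      by (auto simp: card_Diff_singleton of_nat_diff)
  qed (auto simp: insert_absorb)
  also have "{G. G \<subseteq> A \<and> int (card G) = j \<and> e \<notin> G} = {G. G \<subseteq> A - {e} \<and> int (card G) = j}"
    by auto
  finally show ?thesis .
qed

lemma sum_Pow_notin_mixed_diff: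
  assumes "finite H" "e \<in> H"
  shows "(\<Sum>G\<in>Pow H. of_bool (e \<notin> G) * ((-1) ^ card (H - G) * g G)) = - mixed_diff (H - {e}) g"
proof -
  have "(\<Sum>G\<in>Pow H. of_bool (e \<notin> G) * ((-1) ^ card (H - G) * g G))
      = (\<Sum>G\<in>Pow (H - {e}). (-1) ^ card (H - G) * g G)"
    using assms(1) by (intro sum.mono_neutral_cong_right) auto
  also have "\<dots> = (\<Sum>G\<in>Pow (H - {e}). - ((-1) ^ card (H - {e} - G) * g G))"
  proof (rule sum.cong)
    fix G assume "G \<in> Pow (H - {e})"
    then have "H - G = insert e (H - {e} - G)" "e \<notin> H - {e} - G" using assms(2) by auto
    then have "card (H - G) = Suc (card (H - {e} - G))" using assms(1) by simp
    then show "(-1) ^ card (H - G) * g G = - ((-1) ^ card (H - {e} - G) * g G)" by simp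
  qed simp
  finally show ?thesis by (simp add: mixed_diff_def sum_negf)
qed

lemma sum_Pow_in_mixed_diff:
  assumes "finite H" "e \<in> H"
  shows "(\<Sum>G\<in>Pow H. of_bool (e \<in> G) * ((-1) ^ card (H - G) * g G))
    = mixed_diff H g + mixed_diff (H - {e}) g"
proof -
  have "mixed_diff H g = (\<Sum>G\<in>Pow H. of_bool (e \<in> G) * ((-1) ^ card (H - G) * g G))
      + (\<Sum>G\<in>Pow H. of_bool (e \<notin> G) * ((-1) ^ card (H - G) * g G))"
    unfolding mixed_diff_def sum.distrib[symmetric] by (rule sum.cong) auto
  then show ?thesis using sum_Pow_notin_mixed_diff[OF assms, of g] by (simp add: algebra_simps)
qed

lemma layer_diff_insert:
  assumes "finite E" "e \<in> E" "e \<notin> F"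
  shows "layer_diff E F j g = layer_diff E (insert e F) (j - 1) g
    + (\<Sum>G | G \<subseteq> E - insert e F \<and> int (card G) = j. mixed_diff (F \<union> G) g)"
proof -
  have "E - F - {e} = E - insert e F" by auto
  moreover have "F \<union> insert e G = insert e F \<union> G" for G by auto
  ultimately show ?thesis
    unfolding layer_diff_def
    using sum_subsets_card_insert_split[where A = "E - F" and h = "\<lambda>G. mixed_diff (F \<union> G) g"] assms
    by simp
qed

lemma layer_sum_in_mixed_diff:
  assumes "finite E" "F \<subseteq> E" "e \<in> E - F"
  shows "(\<Sum>G | G \<subseteq> E - F \<and> int (card G) = j.
            \<Sum>G'\<in>Pow (F \<union> G). of_bool (e \<in> G') * ((-1) ^ card (F \<union> G - G') * g G'))
    = layer_diff E F (j - 1) g - layer_diff E (insert e F) (j - 2) g + layer_diff E (insert e F) (j - 1) g"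
    (is "(\<Sum>G | _. ?inner (F \<union> G)) = _")
proof -
  have fin: "finite (F \<union> G)" if "G \<subseteq> E" for G
    using assms(1,2) that by (auto dest: finite_subset)
  have E_minus: "E - F - {e} = E - insert e F" by auto
  have "(\<Sum>G | G \<subseteq> E - F \<and> int (card G) = j. ?inner (F \<union> G))
      = (\<Sum>G | G \<subseteq> E - insert e F \<and> int (card G) = j - 1. ?inner (F \<union> insert e G))
        + (\<Sum>G | G \<subseteq> E - insert e F \<and> int (card G) = j. ?inner (F \<union> G))"
    using sum_subsets_card_insert_split[where A = "E - F" and h = "\<lambda>G. ?inner (F \<union> G)"] assms
    by (simp add: E_minus)
  also have "(\<Sum>G | G \<subseteq> E - insert e F \<and> int (card G) = j. ?inner (F \<union> G)) = 0"
    using assms(3) by (intro sum.neutral ballI) auto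
  also have "(\<Sum>G | G \<subseteq> E - insert e F \<and> int (card G) = j - 1. ?inner (F \<union> insert e G))
      = (\<Sum>G | G \<subseteq> E - insert e F \<and> int (card G) = j - 1.
           mixed_diff (insert e F \<union> G) g + mixed_diff (F \<union> G) g)"
  proof (rule sum.cong)
    fix G assume "G \<in> {G. G \<subseteq> E - insert e F \<and> int (card G) = j - 1}"
    then have "F \<union> insert e G = insert e F \<union> G" "F \<union> insert e G - {e} = F \<union> G" "G \<subseteq> E"
      using assms(3) by auto
    then show "?inner (F \<union> insert e G) = mixed_diff (insert e F \<union> G) g + mixed_diff (F \<union> G) g"
      using sum_Pow_in_mixed_diff[OF fin, of "insert e G" e g] assms(3) by simp
  qed simp
  also have "\<dots> = layer_diff E (insert e F) (j - 1) g + layer_diff E F (j - 1) g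
      - layer_diff E (insert e F) (j - 2) g"
    using layer_diff_insert[of E e F "j - 1" g] assms
    by (simp add: sum.distrib layer_diff_def[of E "insert e F" "j - 1"])
  finally show ?thesis by simp
qed

lemma layer_sum_notin_mixed_diff:
  assumes "finite E" "F \<subseteq> E" "e \<in> F"
  shows "(\<Sum>G | G \<subseteq> E - F \<and> int (card G) = j.
            \<Sum>G'\<in>Pow (F \<union> G). of_bool (e \<notin> G') * ((-1) ^ card (F \<union> G - G') * g G'))
    = layer_diff E F (j - 1) g - layer_diff E (F - {e}) j g"
proof -
  have "(\<Sum>G | G \<subseteq> E - F \<and> int (card G) = j.
            \<Sum>G'\<in>Pow (F \<union> G). of_bool (e \<notin> G') * ((-1) ^ card (F \<union> G - G') * g G'))
      = - (\<Sum>G | G \<subseteq> E - F \<and> int (card G) = j. mixed_diff (F - {e} \<union> G) g)"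
  proof (subst sum_negf[symmetric], rule sum.cong)
    fix G assume "G \<in> {G. G \<subseteq> E - F \<and> int (card G) = j}"
    moreover from this have "finite (F \<union> G)" using assms(1,2) by (auto dest: finite_subset)
    moreover from calculation have "F \<union> G - {e} = F - {e} \<union> G" using assms(3) by auto
    ultimately show "(\<Sum>G'\<in>Pow (F \<union> G). of_bool (e \<notin> G') * ((-1) ^ card (F \<union> G - G') * g G'))
        = - mixed_diff (F - {e} \<union> G) g"
      using sum_Pow_notin_mixed_diff[of "F \<union> G" e g] assms(3) by simp
  qed simp
  moreover have "e \<in> E" using assms(2,3) by auto
  ultimately show ?thesis
    using layer_diff_insert[of E e "F - {e}" j g] assms by (simp add: insert_absorb)
qed

lemma dvg_cmul_grad: "dvg (cmul c (grad u)) x = (\<Sum>y | nn x y. c {x, y} * (u y - u x))"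
  unfolding dvg_def cmul_def grad_def ..

lemma dvg_cmul_grad_sum:
  "dvg (cmul c (grad (\<lambda>z. \<Sum>i\<in>I. u i z))) x = (\<Sum>i\<in>I. dvg (cmul c (grad (u i))) x)"
  unfolding dvg_cmul_grad
  by (simp add: sum_subtractf[symmetric] sum_distrib_left) (rule sum.swap)

lemma dvg_cmul_grad_scale:
  "dvg (cmul c (grad (\<lambda>z. k * u z))) x = k * dvg (cmul c (grad u)) x"
  unfolding dvg_cmul_grad sum_distrib_left by (simp add: algebra_simps)

lemma dvg_cmul_grad_diff:
  "dvg (cmul c (grad (\<lambda>z. u z - w z))) x = dvg (cmul c (grad u)) x - dvg (cmul c (grad w)) x"
  unfolding dvg_cmul_grad sum_subtractf[symmetric] by (simp add: algebra_simps)

lemma cupd_decompose: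
  assumes "finite E" "F \<subseteq> E" "G \<subseteq> E"
  shows "cupd a G e' = cupd a F e'
    + (\<Sum>e\<in>E - F. of_bool (e \<in> G) * (cupd a {e} - a) e')
    - (\<Sum>e\<in>F. of_bool (e \<notin> G) * (cupd a {e} - a) e')"
proof -
  have "(cupd a {e} - a) e' = (if e' = e then 1 - a e' else 0)" for e
    by (simp add: cupd_def)
  then have delta: "(\<Sum>e\<in>A. of_bool (P e) * (cupd a {e} - a) e') = of_bool (e' \<in> A \<and> P e') * (1 - a e')"
    if "finite A" for A P
    using that by (simp add: if_distrib[of "\<lambda>t. _ * t"] sum.delta' cong: if_cong)
  show ?thesis
    unfolding delta[OF finite_Diff[OF assms(1)]] delta[OF finite_subset[OF assms(2,1)]]
    using assms(2,3) by (auto simp: cupd_def)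
qed

lemma dvg_cmul_cupd_decompose:
  assumes "finite E" "F \<subseteq> E" "G \<subseteq> E"
  shows "dvg (cmul (cupd a G) (grad u)) x = dvg (cmul (cupd a F) (grad u)) x
    + (\<Sum>e\<in>E - F. of_bool (e \<in> G) * dvg (cmul (cupd a {e} - a) (grad u)) x)
    - (\<Sum>e\<in>F. of_bool (e \<notin> G) * dvg (cmul (cupd a {e} - a) (grad u)) x)"
  unfolding dvg_cmul_grad cupd_decompose[OF assms, of a]
  by (simp add: sum_distrib_left sum_distrib_right sum.distrib sum_subtractf algebra_simps
      sum.swap[of _ "E - F"] sum.swap[of _ F])

lemma neg_dvg_layer_diff_eq_sum_edges:
  fixes u :: "'d::finite edge set \<Rightarrow> 'd pt \<Rightarrow> real"
  assumes "finite E" "F \<subseteq> E"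
    and harmonic: "\<And>G. G \<subseteq> E \<Longrightarrow> dvg (cmul (cupd a G) (grad (u G))) x = 0"
  shows "- dvg (cmul (cupd a F) (grad (\<lambda>z. layer_diff E F j (\<lambda>G. u G z)))) x
    = (\<Sum>e\<in>E - F. dvg (cmul (cupd a {e} - a) (grad (\<lambda>z.
          \<Sum>G | G \<subseteq> E - F \<and> int (card G) = j. \<Sum>G'\<in>Pow (F \<union> G).
            of_bool (e \<in> G') * ((-1) ^ card (F \<union> G - G') * u G' z)))) x)
      - (\<Sum>e\<in>F. dvg (cmul (cupd a {e} - a) (grad (\<lambda>z.
          \<Sum>G | G \<subseteq> E - F \<and> int (card G) = j. \<Sum>G'\<in>Pow (F \<union> G).
            of_bool (e \<notin> G') * ((-1) ^ card (F \<union> G - G') * u G' z)))) x)"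
proof -
  define S where "S = {G. G \<subseteq> E - F \<and> int (card G) = j}"
  define s where "s G G' = ((-1::real) ^ card (F \<union> G - G'))" for G G'
  define L where "L c w = dvg (cmul c (grad w)) x" for c w
  have in_E: "G' \<subseteq> E" if "G \<in> S" "G' \<in> Pow (F \<union> G)" for G G'
    using that assms(2) by (auto simp: S_def)
  have "- L (cupd a F) (\<lambda>z. layer_diff E F j (\<lambda>G. u G z))
      = (\<Sum>G\<in>S. \<Sum>G'\<in>Pow (F \<union> G). s G G' * - L (cupd a F) (u G'))"
    unfolding layer_diff_def mixed_diff_def L_def S_def s_def
    by (simp only: dvg_cmul_grad_sum dvg_cmul_grad_scale sum_negf mult_minus_right)
  also have "\<dots> = (\<Sum>G\<in>S. \<Sum>G'\<in>Pow (F \<union> G). s G G' *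
      ((\<Sum>e\<in>E - F. of_bool (e \<in> G') * L (cupd a {e} - a) (u G'))
       - (\<Sum>e\<in>F. of_bool (e \<notin> G') * L (cupd a {e} - a) (u G'))))"
  proof -
    have "- L (cupd a F) (u G') = (\<Sum>e\<in>E - F. of_bool (e \<in> G') * L (cupd a {e} - a) (u G'))
       - (\<Sum>e\<in>F. of_bool (e \<notin> G') * L (cupd a {e} - a) (u G'))" if "G' \<subseteq> E" for G'
      using dvg_cmul_cupd_decompose[OF assms(1,2) that, of a "u G'" x] harmonic[OF that]
      unfolding L_def by linarith
    then show ?thesis using in_E by (intro sum.cong refl) simp
  qed
  also have "\<dots> = (\<Sum>e\<in>E - F. L (cupd a {e} - a)
        (\<lambda>z. \<Sum>G\<in>S. \<Sum>G'\<in>Pow (F \<union> G). of_bool (e \<in> G') * (s G G' * u G' z)))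
      - (\<Sum>e\<in>F. L (cupd a {e} - a)
        (\<lambda>z. \<Sum>G\<in>S. \<Sum>G'\<in>Pow (F \<union> G). of_bool (e \<notin> G') * (s G G' * u G' z)))"
    unfolding L_def dvg_cmul_grad_sum dvg_cmul_grad_scale right_diff_distrib sum_subtractf
      sum_distrib_left
    by (simp add: algebra_simps sum.swap[of _ "E - F"] sum.swap[of _ F])
  finally show ?thesis unfolding L_def S_def s_def .
qed

lemma neg_dvg_layer_diff:
  fixes u :: "'d::finite edge set \<Rightarrow> 'd pt \<Rightarrow> real"
  assumes "finite E" "F \<subseteq> E"
    and harmonic: "\<And>G. G \<subseteq> E \<Longrightarrow> dvg (cmul (cupd a G) (grad (u G))) x = 0"
  shows "- dvg (cmul (cupd a F) (grad (\<lambda>z. layer_diff E F j (\<lambda>G. u G z)))) x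
    = (\<Sum>e\<in>E - F. dvg (cmul (cupd a {e} - a) (grad (\<lambda>z. layer_diff E F (j - 1) (\<lambda>G. u G z)
          - layer_diff E (insert e F) (j - 2) (\<lambda>G. u G z)
          + layer_diff E (insert e F) (j - 1) (\<lambda>G. u G z)))) x)
      + (\<Sum>e\<in>F. dvg (cmul (cupd a {e} - a) (grad (\<lambda>z. layer_diff E (F - {e}) j (\<lambda>G. u G z)
          - layer_diff E F (j - 1) (\<lambda>G. u G z)))) x)"
    (is "?lhs = ?rhs")
proof -
  have contains_e: "(\<Sum>G | G \<subseteq> E - F \<and> int (card G) = j. \<Sum>G'\<in>Pow (F \<union> G).
        of_bool (e \<in> G') * ((-1) ^ card (F \<union> G - G') * u G' z))
      = layer_diff E F (j - 1) (\<lambda>G. u G z) - layer_diff E (insert e F) (j - 2) (\<lambda>G. u G z)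
        + layer_diff E (insert e F) (j - 1) (\<lambda>G. u G z)" if "e \<in> E - F" for e z
    by (rule layer_sum_in_mixed_diff[OF assms(1,2) that])
  have avoids_e: "(\<Sum>G | G \<subseteq> E - F \<and> int (card G) = j. \<Sum>G'\<in>Pow (F \<union> G).
        of_bool (e \<notin> G') * ((-1) ^ card (F \<union> G - G') * u G' z))
      = layer_diff E F (j - 1) (\<lambda>G. u G z) - layer_diff E (F - {e}) j (\<lambda>G. u G z)"
    if "e \<in> F" for e z
    by (rule layer_sum_notin_mixed_diff[OF assms(1,2) that])
  have "?lhs = (\<Sum>e\<in>E - F. dvg (cmul (cupd a {e} - a) (grad (\<lambda>z.
          \<Sum>G | G \<subseteq> E - F \<and> int (card G) = j. \<Sum>G'\<in>Pow (F \<union> G).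
            of_bool (e \<in> G') * ((-1) ^ card (F \<union> G - G') * u G' z)))) x)
      - (\<Sum>e\<in>F. dvg (cmul (cupd a {e} - a) (grad (\<lambda>z.
          \<Sum>G | G \<subseteq> E - F \<and> int (card G) = j. \<Sum>G'\<in>Pow (F \<union> G).
            of_bool (e \<notin> G') * ((-1) ^ card (F \<union> G - G') * u G' z)))) x)"
    by (rule neg_dvg_layer_diff_eq_sum_edges[OF assms])
  also have "\<dots> = (\<Sum>e\<in>E - F. dvg (cmul (cupd a {e} - a) (grad (\<lambda>z. layer_diff E F (j - 1) (\<lambda>G. u G z)
          - layer_diff E (insert e F) (j - 2) (\<lambda>G. u G z)
          + layer_diff E (insert e F) (j - 1) (\<lambda>G. u G z)))) x)
      - (\<Sum>e\<in>F. dvg (cmul (cupd a {e} - a) (grad (\<lambda>z. layer_diff E F (j - 1) (\<lambda>G. u G z)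
          - layer_diff E (F - {e}) j (\<lambda>G. u G z)))) x)"
    by (simp only: contains_e avoids_e cong: sum.cong)
  also have "\<dots> = ?rhs"
    by (simp add: dvg_cmul_grad_diff sum_subtractf)
  finally show ?thesis .
qed

lemma finite_box: "finite (box m :: 'd::finite pt set)"
proof -
  let ?N = "(3::int) ^ m"
  have "box m \<subseteq> vec_lambda ` (PiE UNIV (\<lambda>_. {-?N..?N}) :: ('d \<Rightarrow> int) set)"
  proof
    fix x :: "'d pt" assume "x \<in> box m"
    then have "\<bar>real_of_int (x $ i)\<bar> < 3 ^ m / 2" for i unfolding box_def by simp
    moreover have "(3::real) ^ m / 2 \<le> 3 ^ m" by simp
    ultimately have "real_of_int \<bar>x $ i\<bar> < real_of_int ?N" for i
      by (simp only: of_int_abs of_int_power of_int_numeral) (meson less_le_trans)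
    then have "\<bar>x $ i\<bar> \<le> ?N" for i by (simp only: of_int_less_iff less_imp_le)
    then have "vec_nth x \<in> PiE UNIV (\<lambda>_. {-?N..?N})" by (simp add: PiE_iff abs_le_iff minus_le_iff)
    then show "x \<in> vec_lambda ` PiE UNIV (\<lambda>_. {-?N..?N})" by (metis image_eqI vec_nth_inverse)
  qed
  then show ?thesis by (rule finite_subset) (simp add: finite_PiE)
qed

lemma finite_edges: "finite U \<Longrightarrow> finite (edges U)"
  unfolding edges_def
  by (rule finite_subset[of _ "(\<lambda>(x, y). {x, y}) ` (U \<times> U)"]) auto

lemma cupd_mem_closure:
  assumes "a \<in> \<Omega>" "\<And>b e. b \<in> \<Omega> \<Longrightarrow> cupd b {e} \<in> \<Omega>" "finite G"
  shows "cupd a G \<in> \<Omega>"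
  using assms(3)
proof (induction G)
  case empty
  then show ?case using assms(1) by (simp add: cupd_def)
next
  case (insert e G)
  moreover have "cupd a (insert e G) = cupd (cupd a G) {e}" by (auto simp: cupd_def)
  ultimately show ?case using assms(2) by simp
qed

lemma Vm_eq_layer_diff:
  "Vm m v a F j = (\<lambda>z. layer_diff (edges (box m)) F j (\<lambda>G. v (cupd a G) z))"
proof
  fix z
  have layer: "{G. G \<subseteq> edges (box m) - F \<and> int (card G) = j}
      = (if j < 0 then {} else {G. G \<subseteq> edges (box m) - F \<and> card G = nat j})"
    by auto
  show "Vm m v a F j z = layer_diff (edges (box m)) F j (\<lambda>G. v (cupd a G) z)"
    unfolding Vm_def layer_diff_def Dop_def mixed_diff_def layer by simp
qed

lemma dvg_Wm:
  "dvg (Wm m v a F j) x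
    = (\<Sum>e\<in>edges (box m) - F. dvg (cmul (cupd a {e} - a) (grad (\<lambda>z. Vm m v a F (j - 1) z
          - Vm m v a (insert e F) (j - 2) z + Vm m v a (insert e F) (j - 1) z))) x)
      + (\<Sum>e\<in>F. dvg (cmul (cupd a {e} - a) (grad (\<lambda>z. Vm m v a (F - {e}) j z
          - Vm m v a F (j - 1) z))) x)"
proof -
  have "Wm m v a F j x = (\<lambda>y.
        (\<Sum>e\<in>edges (box m) - F. cmul (cupd a {e} - a) (grad (\<lambda>z. Vm m v a F (j - 1) z
          - Vm m v a (insert e F) (j - 2) z + Vm m v a (insert e F) (j - 1) z)) x y)
      + (\<Sum>e\<in>F. cmul (cupd a {e} - a) (grad (\<lambda>z. Vm m v a (F - {e}) j z
          - Vm m v a F (j - 1) z)) x y))"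
    unfolding Wm_def cmul_def grad_def by (simp add: algebra_simps)
  then show ?thesis
    unfolding dvg_def by (simp only: sum.distrib) (intro arg_cong2[where f = "(+)"] sum.swap)
qed

theorem lemma3p5:
  fixes m :: nat and \<xi> :: "real ^ 'd::finite" and \<Omega> :: "'d conf set"
    and v :: "'d conf \<Rightarrow> 'd pt \<Rightarrow> real" and a :: "'d conf"
    and F :: "'d edge set" and j :: nat
  assumes "a \<in> \<Omega>"
    and "\<And>b e. b \<in> \<Omega> \<Longrightarrow> cupd b {e} \<in> \<Omega>"
    and "\<And>b x. b \<in> \<Omega> \<Longrightarrow> x \<in> bdry (box m) \<Longrightarrow>
           v b x = \<xi> \<bullet> (\<chi> i. real_of_int (x $ i))"
    and "\<And>b x. b \<in> \<Omega> \<Longrightarrow> x \<in> intr (box m) \<Longrightarrow> dvg (cmul b (grad (v b))) x = 0"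
    and "F \<subseteq> edges (box m)"
  shows "\<forall>x\<in>intr (box m).
           - dvg (cmul (cupd a F) (grad (Vm m v a F (int j)))) x = dvg (Wm m v a F (int j)) x"
proof
  fix x :: "'d pt" assume x: "x \<in> intr (box m)"
  have fin: "finite (edges (box m) :: 'd edge set)"
    by (intro finite_edges finite_box)
  have "dvg (cmul (cupd a G) (grad (v (cupd a G)))) x = 0" if "G \<subseteq> edges (box m)" for G
    using assms(4)[OF cupd_mem_closure[OF assms(1,2)] x] finite_subset[OF that fin] by blast
  from neg_dvg_layer_diff[OF fin assms(5), where u = "\<lambda>G. v (cupd a G)", OF this]
  show "- dvg (cmul (cupd a F) (grad (Vm m v a F (int j)))) x = dvg (Wm m v a F (int j)) x"
    unfolding dvg_Wm Vm_eq_layer_diff .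
qed

end
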